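(* In every dynamic network congestion game, every blind Nash equilibrium is a Nash equilibrium (i.e., no player can decrease their cost by deviating to an arbitrary, not necessarily blind, strategy).
   Context: Let $\mathcal F$ be the set of non-decreasing piecewise-affine functions $\mathbb N\to\mathbb N$ with finitely many pieces. An arena is $\mathcal A=(V,E,\mathsf{src},\mathsf{tgt})$ with $V$ finite, $E$ a partial function $V\times V\to\mathcal F$ (edge $e=(v,\ell_e,v')$ has cost function $\ell_e$); $\mathsf{tgt}$ has only a self-loop of constant cost $0$ and is reachable from every state. A dynamic NCG $(\mathcal A,n)$ has players $[n]=\{1,\dots,n\}$, all starting in $\mathsf{src}$. In each step each player $i$ simultaneously picks an edge $e_i$ leaving their current state, moves along it, and pays $\ell_{e_i}(u_i)$, $u_i$ being the number of players choosing edge $e_i$ in that step. A strategy for player $i$ maps each finite history (sequence of configurations $[n]\to V$ and steps from the initial configuration) to an edge leaving player $i$'s current state; $\mathrm{cost}_i(\sigma)$ is player $i$'s total payment along the outcome of profile $\sigma$ until reaching $\mathsf{tgt}$ ($+\infty$ if never). $\sigma$ is a Nash equilibrium if for every $k$, $\mathrm{cost}_k(\sigma)=\inf_{\sigma'_k}\mathrm{cost}_k(\langle\sigma_{-k},\sigma'_k\rangle)$ over all strategies $\sigma'_k$, where $\langle\sigma_{-k},\sigma'_k\rangle$ replaces $\sigma_k$ by $\sigma'_k$. A strategy is blind if it depends only on the sequence of states visited by the player itself (it follows a fixed path in $\mathcal A$). A blind Nash equilibrium is a profile of blind strategies in which no player can decrease their cost by switching to another blind strategy. *)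

theory Defs
  imports Main "HOL-Library.Extended_Nat"
begin

text \<open>Pieces are the intervals [t j, t (j+1)) for j < k-1 and [t (k-1), infinity);
  on piece j the function equals x \<mapsto> a j * x + b j.\<close>
definition piecewise_affine :: "(nat \<Rightarrow> nat) \<Rightarrow> bool" where
  "piecewise_affine f \<longleftrightarrow>
     (\<exists>(k::nat) (t::nat \<Rightarrow> nat) (a::nat \<Rightarrow> real) (b::nat \<Rightarrow> real).
        k \<ge> 1 \<and> t 0 = 0 \<and> (\<forall>j. j + 1 < k \<longrightarrow> t j < t (j + 1)) \<and>
        (\<forall>j x. j < k \<and> t j \<le> x \<and> (j + 1 < k \<longrightarrow> x < t (j + 1))
               \<longrightarrow> real (f x) = a j * real x + b j))"

definition cost_fun :: "(nat \<Rightarrow> nat) \<Rightarrow> bool" where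
  "cost_fun f \<longleftrightarrow> mono f \<and> piecewise_affine f"

text \<open>E v v' = Some l means there is an edge (v, l, v'). Edges are identified with pairs of states.\<close>
definition arena :: "'v set \<Rightarrow> ('v \<Rightarrow> 'v \<Rightarrow> (nat \<Rightarrow> nat) option) \<Rightarrow> 'v \<Rightarrow> 'v \<Rightarrow> bool" where
  "arena V E src tgt \<longleftrightarrow>
     finite V \<and> src \<in> V \<and> tgt \<in> V \<and>
     (\<forall>v v' l. E v v' = Some l \<longrightarrow> v \<in> V \<and> v' \<in> V \<and> cost_fun l) \<and>
     E tgt tgt = Some (\<lambda>_. 0) \<and> (\<forall>v. v \<noteq> tgt \<longrightarrow> E tgt v = None) \<and>
     (\<forall>v\<in>V. (v, tgt) \<in> {(x, y). E x y \<noteq> None}\<^sup>*)"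

definition is_edge :: "('v \<Rightarrow> 'v \<Rightarrow> (nat \<Rightarrow> nat) option) \<Rightarrow> 'v \<times> 'v \<Rightarrow> bool" where
  "is_edge E e \<longleftrightarrow> E (fst e) (snd e) \<noteq> None"

definition edge_cost :: "('v \<Rightarrow> 'v \<Rightarrow> (nat \<Rightarrow> nat) option) \<Rightarrow> 'v \<times> 'v \<Rightarrow> nat \<Rightarrow> nat" where
  "edge_cost E e = the (E (fst e) (snd e))"

text \<open>Players are 1..n. A step assigns to each player the edge it takes.
  A history is the list of steps taken so far from the initial configuration
  (all players in src); the configurations are determined by the steps.\<close>
type_synonym 'v step = "nat \<Rightarrow> 'v \<times> 'v"
type_synonym 'v history = "'v step list"
type_synonym 'v strategy = "'v history \<Rightarrow> 'v \<times> 'v"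

definition cur :: "'v \<Rightarrow> 'v history \<Rightarrow> nat \<Rightarrow> 'v" where
  "cur src h i = (if h = [] then src else snd (last h i))"

definition strategy :: "('v \<Rightarrow> 'v \<Rightarrow> (nat \<Rightarrow> nat) option) \<Rightarrow> 'v \<Rightarrow> nat \<Rightarrow> 'v strategy \<Rightarrow> bool" where
  "strategy E src i s \<longleftrightarrow> (\<forall>h. is_edge E (s h) \<and> fst (s h) = cur src h i)"

definition visited :: "'v \<Rightarrow> 'v history \<Rightarrow> nat \<Rightarrow> 'v list" where
  "visited src h i = src # map (\<lambda>st. snd (st i)) h"

definition blind :: "'v \<Rightarrow> nat \<Rightarrow> 'v strategy \<Rightarrow> bool" where
  "blind src i s \<longleftrightarrow> (\<forall>h h'. visited src h i = visited src h' i \<longrightarrow> s h = s h')"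

definition blind_strategy :: "('v \<Rightarrow> 'v \<Rightarrow> (nat \<Rightarrow> nat) option) \<Rightarrow> 'v \<Rightarrow> nat \<Rightarrow> 'v strategy \<Rightarrow> bool" where
  "blind_strategy E src i s \<longleftrightarrow> strategy E src i s \<and> blind src i s"

primrec out_hist :: "(nat \<Rightarrow> 'v strategy) \<Rightarrow> nat \<Rightarrow> 'v history" where
  "out_hist \<sigma> 0 = []"
| "out_hist \<sigma> (Suc k) = out_hist \<sigma> k @ [(\<lambda>i. \<sigma> i (out_hist \<sigma> k))]"

definition out_step :: "(nat \<Rightarrow> 'v strategy) \<Rightarrow> nat \<Rightarrow> 'v step" where
  "out_step \<sigma> k = (\<lambda>i. \<sigma> i (out_hist \<sigma> k))"

definition payment :: "('v \<Rightarrow> 'v \<Rightarrow> (nat \<Rightarrow> nat) option) \<Rightarrow> nat \<Rightarrow> (nat \<Rightarrow> 'v strategy) \<Rightarrow> nat \<Rightarrow> nat \<Rightarrow> nat" where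
  "payment E n \<sigma> i k =
     (let st = out_step \<sigma> k
      in edge_cost E (st i) (card {j \<in> {1..n}. st j = st i}))"

definition reaches :: "'v \<Rightarrow> 'v \<Rightarrow> (nat \<Rightarrow> 'v strategy) \<Rightarrow> nat \<Rightarrow> nat \<Rightarrow> bool" where
  "reaches src tgt \<sigma> i k \<longleftrightarrow> cur src (out_hist \<sigma> k) i = tgt"

definition cost :: "('v \<Rightarrow> 'v \<Rightarrow> (nat \<Rightarrow> nat) option) \<Rightarrow> 'v \<Rightarrow> 'v \<Rightarrow> nat \<Rightarrow> (nat \<Rightarrow> 'v strategy) \<Rightarrow> nat \<Rightarrow> enat" where
  "cost E src tgt n \<sigma> i =
     (if \<exists>k. reaches src tgt \<sigma> i k
      then enat (\<Sum>k < (LEAST k. reaches src tgt \<sigma> i k). payment E n \<sigma> i k)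
      else \<infinity>)"

definition nash_eq :: "('v \<Rightarrow> 'v \<Rightarrow> (nat \<Rightarrow> nat) option) \<Rightarrow> 'v \<Rightarrow> 'v \<Rightarrow> nat \<Rightarrow> (nat \<Rightarrow> 'v strategy) \<Rightarrow> bool" where
  "nash_eq E src tgt n \<sigma> \<longleftrightarrow>
     (\<forall>i\<in>{1..n}. strategy E src i (\<sigma> i)) \<and>
     (\<forall>k\<in>{1..n}. cost E src tgt n \<sigma> k =
        (INF s' \<in> {s. strategy E src k s}. cost E src tgt n (\<sigma>(k := s')) k))"

definition blind_nash_eq :: "('v \<Rightarrow> 'v \<Rightarrow> (nat \<Rightarrow> nat) option) \<Rightarrow> 'v \<Rightarrow> 'v \<Rightarrow> nat \<Rightarrow> (nat \<Rightarrow> 'v strategy) \<Rightarrow> bool" where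
  "blind_nash_eq E src tgt n \<sigma> \<longleftrightarrow>
     (\<forall>i\<in>{1..n}. blind_strategy E src i (\<sigma> i)) \<and>
     (\<forall>k\<in>{1..n}. \<forall>s'. blind_strategy E src k s' \<longrightarrow>
        cost E src tgt n \<sigma> k \<le> cost E src tgt n (\<sigma>(k := s')) k)"

end

theory Submission
  imports Defs
begin

text \<open>Fix the strategies of all players but k. A deviation s of player k then yields one
  outcome, along which k follows some path. The blind strategy that follows this path produces
  exactly the same outcome, hence the same cost, so a blind Nash equilibrium admits no profitable
  deviation at all.\<close>

lemma length_out_hist [simp]: "length (out_hist \<sigma> m) = m"
  by (induction m) auto

lemma out_step_eq_last_out_hist: "out_step \<sigma> m = last (out_hist \<sigma> (Suc m))"
  by (simp add: out_step_def)

lemma cost_eq_if_out_hist_eq: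
  assumes "\<And>m. out_hist \<tau> m = out_hist \<tau>' m"
  shows "cost E src tgt n \<tau> k = cost E src tgt n \<tau>' k"
  unfolding cost_def reaches_def payment_def out_step_eq_last_out_hist assms ..

lemma last_visited: "last (visited src h i) = cur src h i"
  by (simp add: visited_def cur_def last_map)

lemma length_eq_if_visited_eq:
  "visited src h i = visited src h' i \<Longrightarrow> length h = length h'"
  unfolding visited_def by (metis length_map list.inject)

lemma cur_single_step [simp]: "cur src [\<lambda>_. (v, v)] i = v"
  by (simp add: cur_def)

text \<open>Off the recorded outcome H, the strategy is consulted on a one-step history ending in the
  current state of i; this keeps the replaying strategy legal without choosing an edge by hand.\<close>
definition replay_hist :: "'v \<Rightarrow> nat \<Rightarrow> (nat \<Rightarrow> 'v history) \<Rightarrow> 'v history \<Rightarrow> 'v history" where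
  "replay_hist src i H h =
     (if visited src h i = visited src (H (length h)) i then H (length h)
      else [\<lambda>_. (cur src h i, cur src h i)])"

lemma replay_hist_cong:
  assumes "visited src h i = visited src h' i"
  shows "replay_hist src i H h = replay_hist src i H h'"
proof -
  have "length h = length h'" and "cur src h i = cur src h' i"
    using assms length_eq_if_visited_eq last_visited by metis+
  with assms show ?thesis
    by (simp add: replay_hist_def)
qed

lemma cur_replay_hist [simp]: "cur src (replay_hist src i H h) i = cur src h i"
  using last_visited[of src h i] last_visited[of src "H (length h)" i]
  unfolding replay_hist_def by auto

lemma replay_hist_on_path:
  "length (H m) = m \<Longrightarrow> replay_hist src i H (H m) = H m"
  by (simp add: replay_hist_def)

lemma blind_strategy_replay:
  assumes "strategy E src i s"
  shows "blind_strategy E src i (s \<circ> replay_hist src i H)"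
  using assms unfolding blind_strategy_def strategy_def blind_def
  by (metis comp_apply cur_replay_hist replay_hist_cong)

lemma out_hist_replay:
  "out_hist (\<tau>(i := s \<circ> replay_hist src i (out_hist (\<tau>(i := s))))) m = out_hist (\<tau>(i := s)) m"
proof (induction m)
  case (Suc m)
  have "(\<tau>(i := s \<circ> replay_hist src i (out_hist (\<tau>(i := s))))) j (out_hist (\<tau>(i := s)) m)
      = (\<tau>(i := s)) j (out_hist (\<tau>(i := s)) m)" for j
    by (simp add: replay_hist_on_path)
  with Suc show ?case
    by (simp add: comp_def del: fun_upd_apply)
qed simp

lemma blind_strategy_with_same_cost:
  assumes "strategy E src i s"
  obtains s' where "blind_strategy E src i s'"
    and "cost E src tgt n (\<tau>(i := s')) j = cost E src tgt n (\<tau>(i := s)) j"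
  using that[OF blind_strategy_replay[OF assms] cost_eq_if_out_hist_eq[OF out_hist_replay]] .

lemma nash_eq_if_no_profitable_deviation:
  assumes "\<forall>i\<in>{1..n}. strategy E src i (\<sigma> i)"
    and "\<And>k s. k \<in> {1..n} \<Longrightarrow> strategy E src k s \<Longrightarrow>
           cost E src tgt n \<sigma> k \<le> cost E src tgt n (\<sigma>(k := s)) k"
  shows "nash_eq E src tgt n \<sigma>"
proof -
  have "cost E src tgt n \<sigma> k = (INF s \<in> {s. strategy E src k s}. cost E src tgt n (\<sigma>(k := s)) k)"
    if k: "k \<in> {1..n}" for k
  proof (rule antisym)
    show "cost E src tgt n \<sigma> k \<le> (INF s \<in> {s. strategy E src k s}. cost E src tgt n (\<sigma>(k := s)) k)"
      using assms(2)[OF k] by (blast intro: INF_greatest)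
    have "strategy E src k (\<sigma> k)"
      using assms(1) k by blast
    then show "(INF s \<in> {s. strategy E src k s}. cost E src tgt n (\<sigma>(k := s)) k) \<le> cost E src tgt n \<sigma> k"
      by (metis (mono_tags, lifting) INF_lower fun_upd_triv mem_Collect_eq)
  qed
  with assms(1) show ?thesis
    unfolding nash_eq_def by blast
qed

theorem mainTheorem3:
  fixes V :: "'v set" and E :: "'v \<Rightarrow> 'v \<Rightarrow> (nat \<Rightarrow> nat) option"
    and src tgt :: 'v and n :: nat and \<sigma> :: "nat \<Rightarrow> 'v strategy"
  assumes "arena V E src tgt"
    and "blind_nash_eq E src tgt n \<sigma>"
  shows "nash_eq E src tgt n \<sigma>"
proof (rule nash_eq_if_no_profitable_deviation)
  show "\<forall>i\<in>{1..n}. strategy E src i (\<sigma> i)"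
    using assms(2) by (simp add: blind_nash_eq_def blind_strategy_def)
next
  fix k s
  assume k: "k \<in> {1..n}" and s: "strategy E src k s"
  obtain s' where "blind_strategy E src k s'"
    and "cost E src tgt n (\<sigma>(k := s')) k = cost E src tgt n (\<sigma>(k := s)) k"
    using blind_strategy_with_same_cost[OF s] .
  then show "cost E src tgt n \<sigma> k \<le> cost E src tgt n (\<sigma>(k := s)) k"
    using assms(2) k unfolding blind_nash_eq_def by metis
qed

end
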